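(* For every positive integer $P$, the linear program (NS-LP) defined in the context is a relaxation of problem (NS) with parameter $P$: for every feasible solution $(\boldsymbol{x},\boldsymbol{y},\boldsymbol{r},\boldsymbol{z},\boldsymbol{\theta})$ of (NS) there exists a feasible solution of (NS-LP) with the same $\boldsymbol{x},\boldsymbol{y}$ and objective value no larger; in particular the optimal value of (NS-LP) is at most the optimal value of (NS).
   Context: Network: a directed graph $\mathcal{G}=(\mathcal{I},\mathcal{L})$; link $(i,j)$ has delay $d_{ij}\ge0$ and capacity $C_{ij}$; cloud nodes $\mathcal{V}\subseteq\mathcal{I}$ with capacities $\mu_v$. Services $k\in\mathcal{K}$ have source $S(k)\notin\mathcal{V}$, destination $D(k)\notin\mathcal{V}$, function index set $\mathcal{F}(k)=\{1,\dots,\ell_k\}$, rates $\lambda_s(k)$ for $s\in\mathcal{F}(k)\cup\{0\}$, NFV delays $d_{v,s}(k)$, and E2E thresholds $\Theta_k$; $\sigma>0$ is a constant, $\mathcal{P}=\{1,\dots,P\}$. Convention: for every node $i\in\mathcal{I}$, $x_{i,0}(k)=1$ iff $i=S(k)$ (else $0$), $x_{i,\ell_k+1}(k)=1$ iff $i=D(k)$ (else $0$), and $x_{i,s}(k)=0$ for $i\notin\mathcal{V}$, $s\in\mathcal{F}(k)$. Write $\theta_N(k)=\sum_{v\in\mathcal{V}}\sum_{s\in\mathcal{F}(k)}d_{v,s}(k)x_{v,s}(k)$ and $\theta_L(k)=\sum_{s\in\mathcal{F}(k)\cup\{0\}}\theta(k,s)$; objective $\Phi=\sum_{v}y_v+\sigma\sum_k(\theta_L(k)+\theta_N(k))$.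 Problem (NS): minimize $\Phi$ over $x_{v,s}(k),y_v\in\{0,1\}$, $r(k,s,p),r_{ij}(k,s,p)\ge0$, $z_{ij}(k,s,p)\in\{0,1\}$, $\theta(k,s)\ge0$ subject to: $\sum_{v}x_{v,s}(k)=1$; $x_{v,s}(k)\le y_v$; $\sum_k\sum_{s\in\mathcal{F}(k)}\lambda_s(k)x_{v,s}(k)\le\mu_vy_v$; $\sum_{p}r(k,s,p)=1$; $r_{ij}(k,s,p)=r(k,s,p)z_{ij}(k,s,p)$; $\sum_k\sum_{s\in\mathcal{F}(k)\cup\{0\}}\sum_p\lambda_s(k)r_{ij}(k,s,p)\le C_{ij}$; $\sum_{j:(j,i)\in\mathcal{L}}z_{ji}(k,s,p)-\sum_{j:(i,j)\in\mathcal{L}}z_{ij}(k,s,p)=x_{i,s+1}(k)-x_{i,s}(k)$ for all $i\in\mathcal{I}$; $\theta(k,s)\ge\sum_{(i,j)}d_{ij}z_{ij}(k,s,p)$; $\theta_N(k)+\theta_L(k)\le\Theta_k$ (all for all relevant indices $v\in\mathcal{V},k\in\mathcal{K},s,p\in\mathcal{P},(i,j)\in\mathcal{L}$). Problem (NS-LP): minimize $\Phi$ over continuous variables $x_{v,s}(k),y_v\in[0,1]$, $z_{ij}(k,s)\in[0,1]$, $\theta(k,s)\ge0$ (single path index) subject to: $\sum_v x_{v,s}(k)=1$; $x_{v,s}(k)\le y_v$; $\sum_k\sum_{s\in\mathcal{F}(k)}\lambda_s(k)x_{v,s}(k)\le\mu_vy_v$; $\sum_k\sum_{s\in\mathcal{F}(k)\cup\{0\}}\lambda_s(k)z_{ij}(k,s)\le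 C_{ij}$; $\sum_{j:(j,i)\in\mathcal{L}}z_{ji}(k,s)-\sum_{j:(i,j)\in\mathcal{L}}z_{ij}(k,s)=x_{i,s+1}(k)-x_{i,s}(k)$ for all $i\in\mathcal{I}$; $\theta(k,s)\ge\sum_{(i,j)}d_{ij}z_{ij}(k,s)$; $\theta_N(k)+\theta_L(k)\le\Theta_k$. *)

theory Defs
  imports Complex_Main
begin

record ('i, 'k) nsinst =
  nodes    :: "'i set"
  links    :: "('i \<times> 'i) set"
  ldelay   :: "'i \<times> 'i \<Rightarrow> real"
  cap      :: "'i \<times> 'i \<Rightarrow> real"
  clouds   :: "'i set"
  mu       :: "'i \<Rightarrow> real"
  services :: "'k set"
  src      :: "'k \<Rightarrow> 'i"
  dst      :: "'k \<Rightarrow> 'i"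
  len      :: "'k \<Rightarrow> nat"
  rate     :: "'k \<Rightarrow> nat \<Rightarrow> real"
  nfvdelay :: "'i \<Rightarrow> 'k \<Rightarrow> nat \<Rightarrow> real"
  thr      :: "'k \<Rightarrow> real"
  sigma    :: real

definition wf_inst :: "('i, 'k) nsinst \<Rightarrow> bool" where
  "wf_inst N \<longleftrightarrow> finite (nodes N) \<and> links N \<subseteq> nodes N \<times> nodes N
     \<and> (\<forall>e \<in> links N. ldelay N e \<ge> 0)
     \<and> clouds N \<subseteq> nodes N \<and> finite (services N)
     \<and> (\<forall>k \<in> services N. src N k \<in> nodes N - clouds N \<and> dst N k \<in> nodes N - clouds N)
     \<and> sigma N > 0"

definition Fk :: "('i, 'k) nsinst \<Rightarrow> 'k \<Rightarrow> nat set" where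
  "Fk N k = {1..len N k}"

definition xext :: "('i, 'k) nsinst \<Rightarrow> ('k \<Rightarrow> 'i \<Rightarrow> nat \<Rightarrow> real) \<Rightarrow> 'k \<Rightarrow> 'i \<Rightarrow> nat \<Rightarrow> real" where
  "xext N x k i s =
     (if s = 0 then (if i = src N k then 1 else 0)
      else if s = len N k + 1 then (if i = dst N k then 1 else 0)
      else if i \<in> clouds N then x k i s else 0)"

definition thetaN :: "('i, 'k) nsinst \<Rightarrow> ('k \<Rightarrow> 'i \<Rightarrow> nat \<Rightarrow> real) \<Rightarrow> 'k \<Rightarrow> real" where
  "thetaN N x k = (\<Sum>v \<in> clouds N. \<Sum>s \<in> Fk N k. nfvdelay N v k s * x k v s)"

definition thetaL :: "('i, 'k) nsinst \<Rightarrow> ('k \<Rightarrow> nat \<Rightarrow> real) \<Rightarrow> 'k \<Rightarrow> real" where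
  "thetaL N th k = (\<Sum>s \<in> {0..len N k}. th k s)"

definition Phi :: "('i, 'k) nsinst \<Rightarrow> ('k \<Rightarrow> 'i \<Rightarrow> nat \<Rightarrow> real) \<Rightarrow> ('i \<Rightarrow> real)
                    \<Rightarrow> ('k \<Rightarrow> nat \<Rightarrow> real) \<Rightarrow> real" where
  "Phi N x y th = (\<Sum>v \<in> clouds N. y v)
      + sigma N * (\<Sum>k \<in> services N. thetaL N th k + thetaN N x k)"

definition placement_ok :: "('i, 'k) nsinst \<Rightarrow> ('k \<Rightarrow> 'i \<Rightarrow> nat \<Rightarrow> real) \<Rightarrow> ('i \<Rightarrow> real) \<Rightarrow> bool" where
  "placement_ok N x y \<longleftrightarrow>
     (\<forall>k \<in> services N. \<forall>s \<in> Fk N k. (\<Sum>v \<in> clouds N. x k v s) = 1)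
   \<and> (\<forall>k \<in> services N. \<forall>s \<in> Fk N k. \<forall>v \<in> clouds N. x k v s \<le> y v)
   \<and> (\<forall>v \<in> clouds N. (\<Sum>k \<in> services N. \<Sum>s \<in> Fk N k. rate N k s * x k v s) \<le> mu N v * y v)"

definition NS_feasible ::
  "('i, 'k) nsinst \<Rightarrow> nat \<Rightarrow> ('k \<Rightarrow> 'i \<Rightarrow> nat \<Rightarrow> real) \<Rightarrow> ('i \<Rightarrow> real)
   \<Rightarrow> ('k \<Rightarrow> nat \<Rightarrow> nat \<Rightarrow> real) \<Rightarrow> ('k \<Rightarrow> nat \<Rightarrow> nat \<Rightarrow> 'i \<times> 'i \<Rightarrow> real)
   \<Rightarrow> ('k \<Rightarrow> nat \<Rightarrow> nat \<Rightarrow> 'i \<times> 'i \<Rightarrow> real) \<Rightarrow> ('k \<Rightarrow> nat \<Rightarrow> real) \<Rightarrow> bool" where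
  "NS_feasible N P x y r rl z th \<longleftrightarrow>
     (\<forall>k \<in> services N. \<forall>v \<in> clouds N. \<forall>s \<in> Fk N k. x k v s \<in> {0, 1})
   \<and> (\<forall>v \<in> clouds N. y v \<in> {0, 1})
   \<and> (\<forall>k \<in> services N. \<forall>s \<in> {0..len N k}. \<forall>p \<in> {1..P}. r k s p \<ge> 0)
   \<and> (\<forall>k \<in> services N. \<forall>s \<in> {0..len N k}. \<forall>p \<in> {1..P}. \<forall>e \<in> links N. rl k s p e \<ge> 0)
   \<and> (\<forall>k \<in> services N. \<forall>s \<in> {0..len N k}. \<forall>p \<in> {1..P}. \<forall>e \<in> links N. z k s p e \<in> {0, 1})
   \<and> (\<forall>k \<in> services N. \<forall>s \<in> {0..len N k}. th k s \<ge> 0)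
   \<and> placement_ok N x y
   \<and> (\<forall>k \<in> services N. \<forall>s \<in> {0..len N k}. (\<Sum>p \<in> {1..P}. r k s p) = 1)
   \<and> (\<forall>k \<in> services N. \<forall>s \<in> {0..len N k}. \<forall>p \<in> {1..P}. \<forall>e \<in> links N.
         rl k s p e = r k s p * z k s p e)
   \<and> (\<forall>e \<in> links N. (\<Sum>k \<in> services N. \<Sum>s \<in> {0..len N k}. \<Sum>p \<in> {1..P}.
         rate N k s * rl k s p e) \<le> cap N e)
   \<and> (\<forall>k \<in> services N. \<forall>s \<in> {0..len N k}. \<forall>p \<in> {1..P}. \<forall>i \<in> nodes N.
         (\<Sum>j \<in> {j. (j, i) \<in> links N}. z k s p (j, i))
       - (\<Sum>j \<in> {j. (i, j) \<in> links N}. z k s p (i, j))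
       = xext N x k i (s + 1) - xext N x k i s)
   \<and> (\<forall>k \<in> services N. \<forall>s \<in> {0..len N k}. \<forall>p \<in> {1..P}.
         th k s \<ge> (\<Sum>e \<in> links N. ldelay N e * z k s p e))
   \<and> (\<forall>k \<in> services N. thetaN N x k + thetaL N th k \<le> thr N k)"

definition NSLP_feasible ::
  "('i, 'k) nsinst \<Rightarrow> ('k \<Rightarrow> 'i \<Rightarrow> nat \<Rightarrow> real) \<Rightarrow> ('i \<Rightarrow> real)
   \<Rightarrow> ('k \<Rightarrow> nat \<Rightarrow> 'i \<times> 'i \<Rightarrow> real) \<Rightarrow> ('k \<Rightarrow> nat \<Rightarrow> real) \<Rightarrow> bool" where
  "NSLP_feasible N x y z th \<longleftrightarrow>
     (\<forall>k \<in> services N. \<forall>v \<in> clouds N. \<forall>s \<in> Fk N k. 0 \<le> x k v s \<and> x k v s \<le> 1)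
   \<and> (\<forall>v \<in> clouds N. 0 \<le> y v \<and> y v \<le> 1)
   \<and> (\<forall>k \<in> services N. \<forall>s \<in> {0..len N k}. \<forall>e \<in> links N. 0 \<le> z k s e \<and> z k s e \<le> 1)
   \<and> (\<forall>k \<in> services N. \<forall>s \<in> {0..len N k}. th k s \<ge> 0)
   \<and> placement_ok N x y
   \<and> (\<forall>e \<in> links N. (\<Sum>k \<in> services N. \<Sum>s \<in> {0..len N k}. rate N k s * z k s e) \<le> cap N e)
   \<and> (\<forall>k \<in> services N. \<forall>s \<in> {0..len N k}. \<forall>i \<in> nodes N.
         (\<Sum>j \<in> {j. (j, i) \<in> links N}. z k s (j, i))
       - (\<Sum>j \<in> {j. (i, j) \<in> links N}. z k s (i, j))
       = xext N x k i (s + 1) - xext N x k i s)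
   \<and> (\<forall>k \<in> services N. \<forall>s \<in> {0..len N k}. th k s \<ge> (\<Sum>e \<in> links N. ldelay N e * z k s e))
   \<and> (\<forall>k \<in> services N. thetaN N x k + thetaL N th k \<le> thr N k)"

end

theory Submission
  imports Defs
begin

text \<open>Aggregating the \<open>P\<close> binary paths of each flow segment with the splitting ratios
  \<open>r(k,s,\<cdot>)\<close> gives a fractional flow \<open>\<Sum>\<^sub>p r(k,s,p) z(k,s,p)\<close>. Since the ratios form a
  probability vector, each constraint of (NS-LP) is a convex combination of the corresponding
  per-path constraints of (NS): flow conservation is linear in \<open>z\<close>, the link loads are exactly
  the \<open>r\<^sub>i\<^sub>j(k,s,p)\<close> terms, and each path delay is already bounded by \<open>\<theta>(k,s)\<close>. As
  \<open>x\<close>, \<open>y\<close>, \<open>\<theta>\<close> are kept, the objective is unchanged. For the infimum one also needs the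
  (NS-LP) objective to be bounded below on its feasible set.\<close>

definition path_aggregate ::
  "nat \<Rightarrow> ('k \<Rightarrow> nat \<Rightarrow> nat \<Rightarrow> real) \<Rightarrow> ('k \<Rightarrow> nat \<Rightarrow> nat \<Rightarrow> 'e \<Rightarrow> real) \<Rightarrow> 'k \<Rightarrow> nat \<Rightarrow> 'e \<Rightarrow> real"
  where "path_aggregate P r z k s e = (\<Sum>p \<in> {1..P}. r k s p * z k s p e)"

lemma convex_comb_const:
  fixes w f :: "'a \<Rightarrow> real"
  assumes "sum w A = 1" and "\<And>p. p \<in> A \<Longrightarrow> f p = c"
  shows "(\<Sum>p \<in> A. w p * f p) = c"
  using assms by (simp add: sum_distrib_right[symmetric])

lemma convex_comb_le_const:
  fixes w f :: "'a \<Rightarrow> real"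
  assumes "\<And>p. p \<in> A \<Longrightarrow> 0 \<le> w p" and "sum w A = 1" and "\<And>p. p \<in> A \<Longrightarrow> f p \<le> c"
  shows "(\<Sum>p \<in> A. w p * f p) \<le> c"
proof -
  have "(\<Sum>p \<in> A. w p * f p) \<le> (\<Sum>p \<in> A. w p * c)"
    using assms(1,3) by (intro sum_mono mult_left_mono) auto
  also have "\<dots> = c"
    using assms(2) by (simp add: convex_comb_const)
  finally show ?thesis .
qed

lemma sum_path_aggregate:
  "(\<Sum>j \<in> J. c j * path_aggregate P r z k s (h j))
     = (\<Sum>p \<in> {1..P}. r k s p * (\<Sum>j \<in> J. c j * z k s p (h j)))"
  unfolding path_aggregate_def sum_distrib_left
  by (subst sum.swap) (simp add: mult_ac)

lemma path_aggregate_unit_interval: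
  assumes "\<And>p. p \<in> {1..P} \<Longrightarrow> 0 \<le> r k s p" and "sum (r k s) {1..P} = 1"
    and "\<And>p. p \<in> {1..P} \<Longrightarrow> 0 \<le> z k s p e \<and> z k s p e \<le> 1"
  shows "0 \<le> path_aggregate P r z k s e \<and> path_aggregate P r z k s e \<le> 1"
proof
  show "0 \<le> path_aggregate P r z k s e"
    unfolding path_aggregate_def using assms(1,3) by (intro sum_nonneg) simp
  show "path_aggregate P r z k s e \<le> 1"
    unfolding path_aggregate_def using assms by (intro convex_comb_le_const) auto
qed

lemma net_inflow_path_aggregate:
  assumes "sum (r k s) {1..P} = 1"
    and "\<And>p. p \<in> {1..P} \<Longrightarrow>
      (\<Sum>j \<in> {j. (j, i) \<in> E}. z k s p (j, i)) - (\<Sum>j \<in> {j. (i, j) \<in> E}. z k s p (i, j)) = b"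
  shows "(\<Sum>j \<in> {j. (j, i) \<in> E}. path_aggregate P r z k s (j, i))
       - (\<Sum>j \<in> {j. (i, j) \<in> E}. path_aggregate P r z k s (i, j)) = b"
proof -
  have "(\<Sum>j \<in> {j. (j, i) \<in> E}. path_aggregate P r z k s (j, i))
      - (\<Sum>j \<in> {j. (i, j) \<in> E}. path_aggregate P r z k s (i, j))
      = (\<Sum>p \<in> {1..P}. r k s p * ((\<Sum>j \<in> {j. (j, i) \<in> E}. z k s p (j, i))
                                   - (\<Sum>j \<in> {j. (i, j) \<in> E}. z k s p (i, j))))"
    by (simp add: right_diff_distrib sum_subtractf
        sum_path_aggregate[where c = "\<lambda>_. 1" and h = "\<lambda>j. (j, i)", simplified]
        sum_path_aggregate[where c = "\<lambda>_. 1" and h = "\<lambda>j. (i, j)", simplified])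
  also have "\<dots> = b"
    using assms by (rule convex_comb_const)
  finally show ?thesis .
qed

lemma linear_cost_path_aggregate_le:
  assumes "\<And>p. p \<in> {1..P} \<Longrightarrow> 0 \<le> r k s p" and "sum (r k s) {1..P} = 1"
    and "\<And>p. p \<in> {1..P} \<Longrightarrow> (\<Sum>e \<in> E. c e * z k s p e) \<le> t"
  shows "(\<Sum>e \<in> E. c e * path_aggregate P r z k s e) \<le> t"
proof -
  have "(\<Sum>e \<in> E. c e * path_aggregate P r z k s e)
      = (\<Sum>p \<in> {1..P}. r k s p * (\<Sum>e \<in> E. c e * z k s p e))"
    by (simp add: sum_path_aggregate[where h = "\<lambda>e. e"])
  also have "\<dots> \<le> t"
    using assms by (rule convex_comb_le_const)
  finally show ?thesis .
qed

lemma NS_feasible_segmentD: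
  assumes "NS_feasible N P x y r rl z th" and "k \<in> services N" and "s \<in> {0..len N k}"
  shows "\<And>p. p \<in> {1..P} \<Longrightarrow> 0 \<le> r k s p"
    and "sum (r k s) {1..P} = 1"
    and "\<And>p e. p \<in> {1..P} \<Longrightarrow> e \<in> links N \<Longrightarrow> 0 \<le> z k s p e \<and> z k s p e \<le> 1"
    and "\<And>p e. p \<in> {1..P} \<Longrightarrow> e \<in> links N \<Longrightarrow> rl k s p e = r k s p * z k s p e"
    and "\<And>p i. p \<in> {1..P} \<Longrightarrow> i \<in> nodes N \<Longrightarrow>
      (\<Sum>j \<in> {j. (j, i) \<in> links N}. z k s p (j, i)) - (\<Sum>j \<in> {j. (i, j) \<in> links N}. z k s p (i, j))
      = xext N x k i (s + 1) - xext N x k i s"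
    and "\<And>p. p \<in> {1..P} \<Longrightarrow> (\<Sum>e \<in> links N. ldelay N e * z k s p e) \<le> th k s"
proof -
  note F = assms(1)[unfolded NS_feasible_def] and ks = assms(2,3)
  show "\<And>p. p \<in> {1..P} \<Longrightarrow> 0 \<le> r k s p"
    using F ks by (elim conjE) fast
  show "sum (r k s) {1..P} = 1"
    using F ks by (elim conjE) fast
  show "0 \<le> z k s p e \<and> z k s p e \<le> 1" if "p \<in> {1..P}" "e \<in> links N" for p e
  proof -
    have "z k s p e \<in> {0, 1}"
      using F ks that by (elim conjE) fast
    then show ?thesis by auto
  qed
  show "\<And>p e. p \<in> {1..P} \<Longrightarrow> e \<in> links N \<Longrightarrow> rl k s p e = r k s p * z k s p e"
    using F ks by (elim conjE) fast
  show "\<And>p i. p \<in> {1..P} \<Longrightarrow> i \<in> nodes N \<Longrightarrow>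
      (\<Sum>j \<in> {j. (j, i) \<in> links N}. z k s p (j, i)) - (\<Sum>j \<in> {j. (i, j) \<in> links N}. z k s p (i, j))
      = xext N x k i (s + 1) - xext N x k i s"
    using F ks by (elim conjE) fast
  show "\<And>p. p \<in> {1..P} \<Longrightarrow> (\<Sum>e \<in> links N. ldelay N e * z k s p e) \<le> th k s"
    using F ks by (elim conjE) fast
qed

lemma NSLP_feasible_path_aggregate:
  assumes feasible: "NS_feasible N P x y r rl z th"
  shows "NSLP_feasible N x y (path_aggregate P r z) th"
proof -
  note segment = NS_feasible_segmentD[OF feasible]
  have unit_interval: "\<forall>k \<in> services N. \<forall>s \<in> {0..len N k}. \<forall>e \<in> links N.
      0 \<le> path_aggregate P r z k s e \<and> path_aggregate P r z k s e \<le> 1"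
    by (intro ballI path_aggregate_unit_interval segment(1-3))
  have capacity: "\<forall>e \<in> links N.
      (\<Sum>k \<in> services N. \<Sum>s \<in> {0..len N k}. rate N k s * path_aggregate P r z k s e) \<le> cap N e"
  proof
    fix e assume e: "e \<in> links N"
    have "(\<Sum>k \<in> services N. \<Sum>s \<in> {0..len N k}. rate N k s * path_aggregate P r z k s e)
        = (\<Sum>k \<in> services N. \<Sum>s \<in> {0..len N k}. \<Sum>p \<in> {1..P}. rate N k s * rl k s p e)"
      unfolding path_aggregate_def sum_distrib_left
      by (intro sum.cong refl) (simp add: segment(4) e)
    also have "\<dots> \<le> cap N e"
      using feasible e unfolding NS_feasible_def by (elim conjE) fast
    finally show "(\<Sum>k \<in> services N. \<Sum>s \<in> {0..len N k}. rate N k s * path_aggregate P r z k s e)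
        \<le> cap N e" .
  qed
  have conservation: "\<forall>k \<in> services N. \<forall>s \<in> {0..len N k}. \<forall>i \<in> nodes N.
      (\<Sum>j \<in> {j. (j, i) \<in> links N}. path_aggregate P r z k s (j, i))
    - (\<Sum>j \<in> {j. (i, j) \<in> links N}. path_aggregate P r z k s (i, j))
    = xext N x k i (s + 1) - xext N x k i s"
    by (intro ballI net_inflow_path_aggregate segment(2,5))
  have delay: "\<forall>k \<in> services N. \<forall>s \<in> {0..len N k}.
      (\<Sum>e \<in> links N. ldelay N e * path_aggregate P r z k s e) \<le> th k s"
    by (intro ballI linear_cost_path_aggregate_le segment(1,2,6))
  show ?thesis
    using feasible unit_interval capacity conservation delay
    unfolding NSLP_feasible_def NS_feasible_def by fastforce
qed

text \<open>The NFV delays \<open>d\<^sub>v\<^sub>,\<^sub>s(k)\<close> are not assumed nonnegative, so the bound has to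
  absorb negative delays.\<close>

lemma thetaN_lower_bound:
  assumes "\<And>v s. v \<in> clouds N \<Longrightarrow> s \<in> Fk N k \<Longrightarrow> 0 \<le> x k v s \<and> x k v s \<le> 1"
  shows "- (\<Sum>v \<in> clouds N. \<Sum>s \<in> Fk N k. \<bar>nfvdelay N v k s\<bar>) \<le> thetaN N x k"
proof -
  have "- \<bar>nfvdelay N v k s\<bar> \<le> nfvdelay N v k s * x k v s"
    if "v \<in> clouds N" "s \<in> Fk N k" for v s
  proof -
    have "\<bar>nfvdelay N v k s * x k v s\<bar> \<le> \<bar>nfvdelay N v k s\<bar>"
      using assms[OF that] by (simp add: abs_mult mult_left_le)
    then show ?thesis by linarith
  qed
  then have "(\<Sum>v \<in> clouds N. \<Sum>s \<in> Fk N k. - \<bar>nfvdelay N v k s\<bar>) \<le> thetaN N x k"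
    unfolding thetaN_def by (intro sum_mono) auto
  then show ?thesis
    by (simp add: sum_negf)
qed

lemma Phi_lower_bound:
  assumes "wf_inst N" and "NSLP_feasible N x y z th"
  shows "- sigma N * (\<Sum>k \<in> services N. \<Sum>v \<in> clouds N. \<Sum>s \<in> Fk N k. \<bar>nfvdelay N v k s\<bar>)
           \<le> Phi N x y th"
proof -
  have per_service:
    "- (\<Sum>v \<in> clouds N. \<Sum>s \<in> Fk N k. \<bar>nfvdelay N v k s\<bar>) \<le> thetaL N th k + thetaN N x k"
    if "k \<in> services N" for k
  proof -
    have "0 \<le> thetaL N th k"
      using assms(2) that unfolding NSLP_feasible_def thetaL_def by (intro sum_nonneg) auto
    moreover have "- (\<Sum>v \<in> clouds N. \<Sum>s \<in> Fk N k. \<bar>nfvdelay N v k s\<bar>) \<le> thetaN N x k"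
      using assms(2) that unfolding NSLP_feasible_def by (intro thetaN_lower_bound) auto
    ultimately show ?thesis by linarith
  qed
  have "- (\<Sum>k \<in> services N. \<Sum>v \<in> clouds N. \<Sum>s \<in> Fk N k. \<bar>nfvdelay N v k s\<bar>)
      \<le> (\<Sum>k \<in> services N. thetaL N th k + thetaN N x k)"
    using per_service by (simp add: sum_negf[symmetric] sum_mono)
  then have "sigma N * - (\<Sum>k \<in> services N. \<Sum>v \<in> clouds N. \<Sum>s \<in> Fk N k. \<bar>nfvdelay N v k s\<bar>)
      \<le> sigma N * (\<Sum>k \<in> services N. thetaL N th k + thetaN N x k)"
    using assms(1) unfolding wf_inst_def by (intro mult_left_mono) auto
  moreover have "0 \<le> (\<Sum>v \<in> clouds N. y v)"
    using assms(2) unfolding NSLP_feasible_def by (intro sum_nonneg) auto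
  ultimately show ?thesis
    unfolding Phi_def by simp
qed

lemma bdd_below_NSLP_objective:
  assumes "wf_inst N"
  shows "bdd_below {Phi N x y th | x y z th. NSLP_feasible N x y z th}"
  using Phi_lower_bound[OF assms] unfolding bdd_below_def by blast

theorem theorem2:
  fixes N :: "('i, 'k) nsinst" and P :: nat
    and x :: "'k \<Rightarrow> 'i \<Rightarrow> nat \<Rightarrow> real" and y :: "'i \<Rightarrow> real"
    and r :: "'k \<Rightarrow> nat \<Rightarrow> nat \<Rightarrow> real"
    and rl z :: "'k \<Rightarrow> nat \<Rightarrow> nat \<Rightarrow> 'i \<times> 'i \<Rightarrow> real"
    and th :: "'k \<Rightarrow> nat \<Rightarrow> real"
  assumes "wf_inst N" and "P \<ge> 1"
    and "NS_feasible N P x y r rl z th"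
  shows "(\<exists>zl thl. NSLP_feasible N x y zl thl \<and> Phi N x y thl \<le> Phi N x y th)
       \<and> Inf {Phi N x' y' th' | x' y' z' th'. NSLP_feasible N x' y' z' th'} \<le> Phi N x y th"
proof
  have relaxed: "NSLP_feasible N x y (path_aggregate P r z) th"
    using assms(3) by (rule NSLP_feasible_path_aggregate)
  then show "\<exists>zl thl. NSLP_feasible N x y zl thl \<and> Phi N x y thl \<le> Phi N x y th"
    by blast
  show "Inf {Phi N x' y' th' | x' y' z' th'. NSLP_feasible N x' y' z' th'} \<le> Phi N x y th"
    using relaxed by (intro cInf_lower bdd_below_NSLP_objective[OF assms(1)]) blast
qed

end
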